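(* Fix true values $B,\phi\in\mathbb{R}$ and the probe $|\psi_0\rangle=\cos\alpha\,|\lambda_{\max}\rangle+e^{i\psi}\sin\alpha\,|\lambda_{\min}\rangle$ (built with this $\phi$). Consider the family $|\Psi(B',\phi')\rangle=\exp\!\big(-iB'(\cos\phi' J_x+\sin\phi' J_y)\big)|\psi_0\rangle$. Its QFIM with respect to $(\phi',B')$, evaluated at $(\phi',B')=(\phi,B)$, is $$\tilde{\mathcal F}_{\phi\phi}=8\sin^2\!\Big(\frac B2\Big)\big[1-\sin(2\alpha)\cos(\psi+B)\big],\qquad \tilde{\mathcal F}_{BB}=4\sin^2(2\alpha),\qquad \tilde{\mathcal F}_{\phi B}=\tilde{\mathcal F}_{B\phi}=0.$$ In particular, for $\alpha=\pi/4$ and $\psi=\pi-B$ one gets $\tilde{\mathcal F}_{\phi\phi}=16\sin^2(B/2)$ and $\tilde{\mathcal F}_{BB}=4$, which equal $4\max_{|\chi\rangle}\mathrm{Var}_{\chi}(\mathcal{H}_\phi)$ and $4\max_{|\chi\rangle}\mathrm{Var}_{\chi}(\mathcal{H}_B)$ over all single-qutrit pure states $|\chi\rangle$, where $\mathcal{H}_\phi,\mathcal{H}_B$ are the effective Hamiltonians of this family at $(\phi,B)$.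
   Context: $\bm J=(J_x,J_y,J_z)^T$ are the spin-1 angular momentum matrices with $J_z|1;m\rangle=m|1;m\rangle$, $m\in\{-1,0,1\}$, standard ladder conventions. $|\lambda_{\max}\rangle=\tfrac12e^{i\phi}|1;-1\rangle+\tfrac1{\sqrt2}|1;0\rangle+\tfrac12e^{-i\phi}|1;1\rangle$ and $|\lambda_{\min}\rangle=\tfrac12e^{i\phi}|1;-1\rangle-\tfrac1{\sqrt2}|1;0\rangle+\tfrac12e^{-i\phi}|1;1\rangle$; $\alpha\in[0,\pi/2]$, $\psi\in[-\pi,\pi]$. For a pure-state family $|\Psi(\bm x)\rangle$ the QFIM is $\mathcal F_{ij}=4\,\mathrm{Re}\big[\langle\partial_i\Psi|\partial_j\Psi\rangle-\langle\partial_i\Psi|\Psi\rangle\langle\Psi|\partial_j\Psi\rangle\big]$. For a unitary family $U(\bm x)|\chi\rangle$, effective Hamiltonians are $\mathcal{H}_j=i(\partial_jU^\dagger)U$; $\mathrm{Var}_\chi(A)=\langle\chi|A^2|\chi\rangle-\langle\chi|A|\chi\rangle^2$. *)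

theory Defs
  imports "HOL-Analysis.Analysis"
begin

text \<open>Index type 3 of the Hilbert space C^3; the index i corresponds to the
  magnetic quantum number mq i: 0 ~ m=1, 1 ~ m=0, 2 ~ m=-1.\<close>

definition mq :: "3 \<Rightarrow> int" where
  "mq i = (if i = 0 then 1 else if i = 1 then 0 else -1)"

definition ket :: "int \<Rightarrow> complex^3" where
  "ket m = (\<chi> i. if mq i = m then 1 else 0)"

definition cscaleM :: "complex \<Rightarrow> complex^'n^'m \<Rightarrow> complex^'n^'m" where
  "cscaleM c A = (\<chi> i j. c * A$i$j)"

definition cscaleV :: "complex \<Rightarrow> complex^'n \<Rightarrow> complex^'n" where
  "cscaleV c v = (\<chi> i. c * v$i)"

definition Jplus :: "complex^3^3" where
  "Jplus = (\<chi> i j. if mq i = mq j + 1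
                     then complex_of_real (sqrt (real_of_int (2 - mq j * (mq j + 1)))) else 0)"

definition Jminus :: "complex^3^3" where
  "Jminus = (\<chi> i j. if mq i = mq j - 1
                     then complex_of_real (sqrt (real_of_int (2 - mq j * (mq j - 1)))) else 0)"

definition Jx :: "complex^3^3" where
  "Jx = cscaleM (1/2) (Jplus + Jminus)"

definition Jy :: "complex^3^3" where
  "Jy = cscaleM (1/(2*\<i>)) (Jplus - Jminus)"

definition Jz :: "complex^3^3" where
  "Jz = (\<chi> i j. if i = j then of_int (mq i) else 0)"

definition braket :: "complex^'n \<Rightarrow> complex^'n \<Rightarrow> complex" where
  "braket u v = (\<Sum>i\<in>UNIV. cnj (u$i) * v$i)"

definition adjoint :: "complex^'n^'n \<Rightarrow> complex^'n^'n" where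
  "adjoint A = (\<chi> i j. cnj (A$j$i))"

fun mpow :: "complex^'n^'n \<Rightarrow> nat \<Rightarrow> complex^'n^'n" where
  "mpow A 0 = mat 1"
| "mpow A (Suc k) = A ** mpow A k"

definition mexp :: "complex^'n^'n \<Rightarrow> complex^'n^'n" where
  "mexp A = (\<Sum>k. (1 / fact k :: real) *\<^sub>R mpow A k)"

definition lam_max :: "real \<Rightarrow> complex^3" where
  "lam_max \<phi> = cscaleV (exp (\<i> * complex_of_real \<phi>) / 2) (ket (-1)) + cscaleV (complex_of_real (1 / sqrt 2)) (ket 0)
               + cscaleV (exp (- \<i> * complex_of_real \<phi>) / 2) (ket 1)"

definition lam_min :: "real \<Rightarrow> complex^3" where
  "lam_min \<phi> = cscaleV (exp (\<i> * complex_of_real \<phi>) / 2) (ket (-1)) - cscaleV (complex_of_real (1 / sqrt 2)) (ket 0)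
               + cscaleV (exp (- \<i> * complex_of_real \<phi>) / 2) (ket 1)"

definition probe :: "real \<Rightarrow> real \<Rightarrow> real \<Rightarrow> complex^3" where
  "probe \<phi> \<alpha> \<psi> = cscaleV (complex_of_real (cos \<alpha>)) (lam_max \<phi>)
                    + cscaleV (exp (\<i> * complex_of_real \<psi>) * complex_of_real (sin \<alpha>)) (lam_min \<phi>)"

definition Uop :: "real \<Rightarrow> real \<Rightarrow> complex^3^3" where
  "Uop \<phi>' B' = mexp (cscaleM (- \<i> * complex_of_real B') (cos \<phi>' *\<^sub>R Jx + sin \<phi>' *\<^sub>R Jy))"

definition Psi :: "complex^3 \<Rightarrow> real \<Rightarrow> real \<Rightarrow> complex^3" where
  "Psi \<psi>0 \<phi>' B' = Uop \<phi>' B' *v \<psi>0"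

definition pd1 :: "(real \<Rightarrow> real \<Rightarrow> 'a::real_normed_vector) \<Rightarrow> real \<Rightarrow> real \<Rightarrow> 'a" where
  "pd1 f a b = vector_derivative (\<lambda>t. f t b) (at a)"

definition pd2 :: "(real \<Rightarrow> real \<Rightarrow> 'a::real_normed_vector) \<Rightarrow> real \<Rightarrow> real \<Rightarrow> 'a" where
  "pd2 f a b = vector_derivative (\<lambda>t. f a t) (at b)"

definition qfim :: "(real \<Rightarrow> real \<Rightarrow> complex^'n) \<Rightarrow> real \<Rightarrow> real \<Rightarrow> nat \<Rightarrow> nat \<Rightarrow> real" where
  "qfim f a b i j =
     (let d = (\<lambda>k. if k = 1 then pd1 f a b else pd2 f a b); u = f a b in
      4 * Re (braket (d i) (d j) - braket (d i) u * braket u (d j)))"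

definition effH :: "(real \<Rightarrow> real \<Rightarrow> complex^'n^'n) \<Rightarrow> real \<Rightarrow> real \<Rightarrow> nat \<Rightarrow> complex^'n^'n" where
  "effH U a b j =
     cscaleM \<i> ((if j = 1 then pd1 (\<lambda>x y. adjoint (U x y)) a b
                else pd2 (\<lambda>x y. adjoint (U x y)) a b) ** U a b)"

definition variance :: "complex^'n \<Rightarrow> complex^'n^'n \<Rightarrow> complex" where
  "variance s A = braket s ((A ** A) *v s) - (braket s (A *v s))^2"

definition is_max_of :: "real set \<Rightarrow> real \<Rightarrow> bool" where
  "is_max_of S m \<longleftrightarrow> m \<in> S \<and> (\<forall>x\<in>S. x \<le> m)"

end

theory Submission
  imports Defs
begin

(* Let lambda_+ = |lambda_max>, lambda_- = |lambda_min> and lambda_0 be the eigenvectors of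
   G(phi) = cos phi J_x + sin phi J_y for the eigenvalues 1, -1, 0.  In this orthonormal basis
   U(phi, B) = e^{-iB} |lambda_+><lambda_+| + e^{iB} |lambda_-><lambda_-| + |lambda_0><lambda_0|,
   and phi only enters through conjugation by e^{-i phi J_z}, so that d/dphi U = -i [J_z, U].
   At the true point Psi = cos(alpha) e^{-iB} lambda_+ + e^{i psi} sin(alpha) e^{iB} lambda_-,
   d/dB Psi carries the extra factors -i and i on the two coordinates, and
   d/dphi Psi = -i (J_z Psi - U J_z psi_0) is a multiple of lambda_0; the QFIM is read off from
   these coordinates.  Each effective Hamiltonian H satisfies H^2 + |w><w| = c 1 for some vector w,
   hence Var_chi(H) = c - |<w|chi>|^2 - <chi|H|chi>^2 <= c, with equality at a unit vector
   orthogonal to w on which H has mean zero. *)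

lemma numeral_3_eq_0: "(3::3) = 0"
  by simp

lemma sum_UNIV_3: "sum f (UNIV :: 3 set) = f 0 + f 1 + f 2"
  using sum_3[of f] by (simp add: numeral_3_eq_0 ac_simps)

lemma all_3: "(\<forall>i::3. P i) \<longleftrightarrow> P 0 \<and> P 1 \<and> P 2"
  using forall_3[of P] by (auto simp: numeral_3_eq_0)

definition vec3 :: "'a \<Rightarrow> 'a \<Rightarrow> 'a \<Rightarrow> 'a^3" where
  "vec3 a0 a1 a2 = (\<chi> i. if i = 0 then a0 else if i = 1 then a1 else a2)"

lemma vec3_nth [simp]: "vec3 a0 a1 a2 $ 0 = a0" "vec3 a0 a1 a2 $ 1 = a1" "vec3 a0 a1 a2 $ 2 = a2"
  by (simp_all add: vec3_def)

lemma vec3_eq_iff: "(x :: 'a^3) = y \<longleftrightarrow> x$0 = y$0 \<and> x$1 = y$1 \<and> x$2 = y$2"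
  by (auto simp: vec_eq_iff all_3)

lemma mat3_eq_iff: "(A :: 'a^3^3) = B \<longleftrightarrow>
    A$0$0 = B$0$0 \<and> A$0$1 = B$0$1 \<and> A$0$2 = B$0$2 \<and>
    A$1$0 = B$1$0 \<and> A$1$1 = B$1$1 \<and> A$1$2 = B$1$2 \<and>
    A$2$0 = B$2$0 \<and> A$2$1 = B$2$1 \<and> A$2$2 = B$2$2"
  by (auto simp: vec3_eq_iff)

lemma matrix_vector_mult_3:
  "(A :: 'a::semiring_1^3^3) *v x = vec3 (A$0$0 * x$0 + A$0$1 * x$1 + A$0$2 * x$2)
     (A$1$0 * x$0 + A$1$1 * x$1 + A$1$2 * x$2) (A$2$0 * x$0 + A$2$1 * x$1 + A$2$2 * x$2)"
  by (simp add: vec3_eq_iff matrix_vector_mult_def sum_UNIV_3)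

lemma braket_3: "braket (u :: complex^3) v = cnj (u$0) * v$0 + cnj (u$1) * v$1 + cnj (u$2) * v$2"
  by (simp add: braket_def sum_UNIV_3)

lemma mq_simps [simp]: "mq 0 = 1" "mq 1 = 0" "mq 2 = -1"
  by (simp_all add: mq_def)

definition outer :: "complex^'n \<Rightarrow> complex^'n^'n" where
  "outer v = (\<chi> i j. v$i * cnj (v$j))"

lemma outer_nth [simp]: "outer v $ i $ j = v$i * cnj (v$j)"
  by (simp add: outer_def)

lemma cscaleM_nth [simp]: "cscaleM c A $ i $ j = c * A$i$j"
  by (simp add: cscaleM_def)

lemma cscaleV_nth [simp]: "cscaleV c v $ i = c * v$i"
  by (simp add: cscaleV_def)

lemma cscaleM_cscaleM: "cscaleM a (cscaleM b A) = cscaleM (a * b) A"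
  by (simp add: vec_eq_iff mult.assoc)

lemma cscaleM_1: "cscaleM 1 A = A"
  by (simp add: vec_eq_iff)

lemma cscaleM_mult_left: "cscaleM c A ** B = cscaleM c (A ** B)"
  by (simp add: vec_eq_iff matrix_matrix_mult_def sum_distrib_left mult.assoc)

lemma cscaleM_mult_vec: "cscaleM c A *v x = cscaleV c (A *v x)"
  by (simp add: vec_eq_iff matrix_vector_mult_def sum_distrib_left algebra_simps)

lemma outer_mult_vec: "outer v *v x = cscaleV (braket v x) v"
  by (simp add: vec_eq_iff matrix_vector_mult_def braket_def sum_distrib_left algebra_simps)

lemma sums_cscaleM:
  assumes "f sums s"
  shows "(\<lambda>k. cscaleM (f k) A) sums cscaleM s A"
proof -
  have "(\<lambda>n. cscaleM (\<Sum>k<n. f k) A) \<longlonglongrightarrow> cscaleM s A"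
    using assms unfolding sums_def cscaleM_def by (intro tendsto_intros)
  moreover have "(\<Sum>k<n. cscaleM (f k) A) = cscaleM (\<Sum>k<n. f k) A" for n
    by (simp add: vec_eq_iff sum_component sum_distrib_right)
  ultimately show ?thesis
    by (simp add: sums_def)
qed

lemma cnj_braket: "cnj (braket u v) = braket v u"
  by (simp add: braket_def mult.commute)

lemma braket_diff_right: "braket s (u - v) = braket s u - braket s v"
  by (simp add: braket_def sum_subtractf algebra_simps)

lemma braket_cscaleV_right: "braket s (cscaleV c v) = c * braket s v"
  by (simp add: braket_def sum_distrib_left algebra_simps)

lemma braket_adjoint: "braket u (A *v v) = braket (adjoint A *v u) v"
  unfolding braket_def matrix_vector_mult_def adjoint_def
  by (simp add: sum_distrib_left sum_distrib_right algebra_simps) (rule sum.swap)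

lemma adjoint_diff: "adjoint (A - B) = adjoint A - adjoint B"
  by (simp add: vec_eq_iff adjoint_def)

lemma adjoint_mult: "adjoint (A ** B) = adjoint B ** adjoint A"
  by (simp add: vec_eq_iff adjoint_def matrix_matrix_mult_def mult.commute)

lemma adjoint_adjoint: "adjoint (adjoint A) = A"
  by (simp add: vec_eq_iff adjoint_def)

lemma adjoint_Jz: "adjoint Jz = Jz"
  by (simp add: vec_eq_iff adjoint_def Jz_def)

lemma cnj_mult_self: "cnj x * x = complex_of_real ((cmod x)\<^sup>2)"
  by (subst complex_norm_square) (rule mult.commute)

section \<open>Maximal variance\<close>

lemma variance_of_square_relation:
  fixes H :: "complex^'n^'n"
  assumes hermitian: "adjoint H = H"
    and square: "\<And>v. H *v (H *v v) = cscaleV (of_real c) v - cscaleV (braket w v) w"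
    and normalized: "braket s s = 1"
  shows "Re (variance s H) = c - (cmod (braket w s))\<^sup>2 - (Re (braket s (H *v s)))\<^sup>2"
proof -
  have "cnj (braket s (H *v s)) = braket s (H *v s)"
    using braket_adjoint[of s H s] by (simp add: hermitian cnj_braket)
  then have real_mean: "braket s (H *v s) = of_real (Re (braket s (H *v s)))"
    by (metis Reals_cnj_iff complex_is_Real_iff of_real_Re)
  have "braket s ((H ** H) *v s) = of_real c - braket w s * cnj (braket w s)"
    by (simp add: square braket_diff_right braket_cscaleV_right normalized cnj_braket
        flip: matrix_vector_mul_assoc)
  then show ?thesis
    unfolding variance_def using cmod_power2[of "braket w s"]
    by (subst real_mean) (simp add: power2_eq_square flip: of_real_mult)
qed

lemma is_max_of_variance:
  fixes H :: "complex^'n^'n"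
  assumes "adjoint H = H"
    and "\<And>v. H *v (H *v v) = cscaleV (of_real c) v - cscaleV (braket w v) w"
    and "braket \<xi> \<xi> = 1" "braket w \<xi> = 0" "braket \<xi> (H *v \<xi>) = 0"
  shows "is_max_of {Re (variance s H) | s. braket s s = 1} c"
  using variance_of_square_relation[OF assms(1,2)] assms(3-5)
  unfolding is_max_of_def by force

lemma vec_has_vector_derivativeI:
  fixes f :: "real \<Rightarrow> 'a::real_normed_vector^'n"
  assumes "\<And>i. ((\<lambda>t. f t $ i) has_vector_derivative f' $ i) (at x)"
  shows "(f has_vector_derivative f') (at x)"
proof -
  have "((\<lambda>y. ((f y $ i - f x $ i) - (y - x) *\<^sub>R f' $ i) /\<^sub>R norm (y - x)) \<longlongrightarrow> 0) (at x)" for i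
    using assms[of i] unfolding has_vector_derivative_def has_derivative_at_within by simp
  then have "((\<lambda>y. ((f y - f x) - (y - x) *\<^sub>R f') /\<^sub>R norm (y - x)) \<longlongrightarrow> 0) (at x)"
    by (intro vec_tendstoI) simp
  then show ?thesis
    unfolding has_vector_derivative_def has_derivative_at_within
    by (simp add: bounded_linear_scaleR_left)
qed

lemma has_vector_derivative_matrix_vector_mult:
  assumes "(M has_vector_derivative M') (at x)"
  shows "((\<lambda>t. (M t :: complex^'n^'m) *v v) has_vector_derivative M' *v v) (at x)"
proof (rule vec_has_vector_derivativeI)
  fix i
  have "((\<lambda>t. M t $ i) has_vector_derivative M' $ i) (at x)"
    by (rule bounded_linear.has_vector_derivative[OF bounded_linear_vec_nth assms])
  then have "((\<lambda>t. M t $ i $ j) has_vector_derivative M' $ i $ j) (at x)" for j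
    by (rule bounded_linear.has_vector_derivative[OF bounded_linear_vec_nth])
  then have "((\<lambda>t. \<Sum>j\<in>UNIV. M t $ i $ j * v $ j) has_vector_derivative
      (\<Sum>j\<in>UNIV. M' $ i $ j * v $ j)) (at x)"
    by (intro has_vector_derivative_sum has_vector_derivative_mult_left)
  then show "((\<lambda>t. (M t *v v) $ i) has_vector_derivative (M' *v v) $ i) (at x)"
    by (simp add: matrix_vector_mult_def)
qed

lemma has_vector_derivative_cis_scaled:
  "((\<lambda>t. cis (k * t)) has_vector_derivative \<i> * of_real k * cis (k * x)) (at x)"
proof -
  have "((\<lambda>y. exp (\<i> * of_real k * y)) has_field_derivative
      \<i> * of_real k * exp (\<i> * of_real k * of_real x)) (at (of_real x))"
    by (auto intro!: derivative_eq_intros)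
  from has_vector_derivative_real_field[OF this] show ?thesis
    by (simp add: cis_conv_exp mult.assoc)
qed

lemma has_vector_derivative_cis_pm:
  "((\<lambda>t. cis t) has_vector_derivative \<i> * cis x) (at x)"
  "((\<lambda>t. cis (- t)) has_vector_derivative - \<i> * cis (- x)) (at x)"
  using has_vector_derivative_cis_scaled[of 1 x] has_vector_derivative_cis_scaled[of "-1" x]
  by simp_all

section \<open>The eigenbasis of the generator\<close>

definition sqrt2 :: complex where
  "sqrt2 = complex_of_real (sqrt 2)"

lemma sqrt2_mult_self: "sqrt2 * sqrt2 = 2"
  unfolding sqrt2_def of_real_mult [symmetric] by simp

lemma sqrt2_mult_self_left: "sqrt2 * (sqrt2 * x) = 2 * x"
  by (simp add: sqrt2_mult_self flip: mult.assoc)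

lemma cnj_sqrt2 [simp]: "cnj sqrt2 = sqrt2"
  by (simp add: sqrt2_def)

text \<open>The parameter \<open>z\<close> stands for \<open>exp (\<i> \<phi>)\<close>.\<close>

definition lam_plus :: "complex \<Rightarrow> complex^3" where
  "lam_plus z = vec3 (cnj z / 2) (sqrt2 / 2) (z / 2)"

definition lam_minus :: "complex \<Rightarrow> complex^3" where
  "lam_minus z = vec3 (cnj z / 2) (- sqrt2 / 2) (z / 2)"

definition lam_zero :: "complex \<Rightarrow> complex^3" where
  "lam_zero z = vec3 (cnj z * sqrt2 / 2) 0 (- z * sqrt2 / 2)"

definition eig_vec :: "complex \<Rightarrow> complex \<Rightarrow> complex \<Rightarrow> complex \<Rightarrow> complex^3" where
  "eig_vec z x y w = cscaleV x (lam_plus z) + cscaleV y (lam_minus z) + cscaleV w (lam_zero z)"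

definition eig_diag :: "complex \<Rightarrow> complex \<Rightarrow> complex \<Rightarrow> complex \<Rightarrow> complex^3^3" where
  "eig_diag z a b c =
     cscaleM a (outer (lam_plus z)) + cscaleM b (outer (lam_minus z)) + cscaleM c (outer (lam_zero z))"

lemma lam_eq_eig_vec:
  "lam_plus z = eig_vec z 1 0 0" "lam_minus z = eig_vec z 0 1 0" "lam_zero z = eig_vec z 0 0 1"
  by (simp_all add: vec_eq_iff eig_vec_def)

lemma eig_vec_nth:
  "eig_vec z x y w = vec3 ((x + y) * cnj z / 2 + w * cnj z * sqrt2 / 2) ((x - y) * sqrt2 / 2)
     ((x + y) * z / 2 - w * z * sqrt2 / 2)"
  by (simp add: vec3_eq_iff eig_vec_def lam_plus_def lam_minus_def lam_zero_def algebra_simps)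

lemma eig_vec_diff: "eig_vec z x y w - eig_vec z x' y' w' = eig_vec z (x - x') (y - y') (w - w')"
  by (simp add: vec_eq_iff eig_vec_def algebra_simps)

lemma cscaleV_eig_vec: "cscaleV c (eig_vec z x y w) = eig_vec z (c * x) (c * y) (c * w)"
  by (simp add: vec_eq_iff eig_vec_def algebra_simps)

lemma braket_eig_vec:
  assumes "z * cnj z = 1"
  shows "braket (eig_vec z x y w) (eig_vec z x' y' w') = cnj x * x' + cnj y * y' + cnj w * w'"
  using assms sqrt2_mult_self
  by (simp add: braket_3 eig_vec_nth field_simps) algebra

lemma eig_vec_span:
  assumes "z * cnj z = 1"
  shows "v = eig_vec z (braket (lam_plus z) v) (braket (lam_minus z) v) (braket (lam_zero z) v)"
  using assms sqrt2_mult_self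
  by (simp add: vec3_eq_iff braket_3 eig_vec_nth lam_plus_def lam_minus_def lam_zero_def field_simps)
    algebra

lemma eig_vec_surj:
  assumes "z * cnj z = 1"
  obtains x y w where "v = eig_vec z x y w"
  using eig_vec_span[OF assms] by blast

lemma eig_diag_mult_eig_vec:
  assumes unit: "z * cnj z = 1"
  shows "eig_diag z a b c *v eig_vec z x y w = eig_vec z (a * x) (b * y) (c * w)"
  unfolding eig_diag_def
  by (simp add: matrix_vector_mult_add_rdistrib cscaleM_mult_vec outer_mult_vec lam_eq_eig_vec
      braket_eig_vec[OF unit], simp add: vec_eq_iff eig_vec_def algebra_simps)

lemma eig_diag_mult:
  assumes unit: "z * cnj z = 1"
  shows "eig_diag z a b c ** eig_diag z a' b' c' = eig_diag z (a * a') (b * b') (c * c')"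
proof (rule iffD2[OF matrix_eq], rule allI)
  fix v
  obtain x y w where "v = eig_vec z x y w"
    using eig_vec_surj[OF unit] .
  then show "(eig_diag z a b c ** eig_diag z a' b' c') *v v = eig_diag z (a * a') (b * b') (c * c') *v v"
    by (simp add: eig_diag_mult_eig_vec[OF unit] ac_simps flip: matrix_vector_mul_assoc)
qed

lemma eig_diag_1:
  assumes unit: "z * cnj z = 1"
  shows "eig_diag z 1 1 1 = mat 1"
proof (rule iffD2[OF matrix_eq], rule allI)
  fix v
  obtain x y w where "v = eig_vec z x y w"
    using eig_vec_surj[OF unit] .
  then show "eig_diag z 1 1 1 *v v = mat 1 *v v"
    by (simp add: eig_diag_mult_eig_vec[OF unit])
qed

lemma adjoint_eig_diag: "adjoint (eig_diag z a b c) = eig_diag z (cnj a) (cnj b) (cnj c)"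
  by (simp add: vec_eq_iff adjoint_def eig_diag_def algebra_simps)

lemma cscaleM_eig_diag: "cscaleM t (eig_diag z a b c) = eig_diag z (t * a) (t * b) (t * c)"
  by (simp add: vec_eq_iff eig_diag_def algebra_simps)

lemma mpow_eig_diag:
  assumes unit: "z * cnj z = 1"
  shows "mpow (eig_diag z a b c) k = eig_diag z (a ^ k) (b ^ k) (c ^ k)"
  by (induction k) (simp_all add: eig_diag_1[OF unit] eig_diag_mult[OF unit])

lemma mexp_eig_diag:
  assumes unit: "z * cnj z = 1"
  shows "mexp (eig_diag z a b c) = eig_diag z (exp a) (exp b) (exp c)"
proof -
  have exp_sums: "(\<lambda>k. x ^ k / fact k) sums exp x" for x :: complex
    using exp_converges[of x] by (simp add: scaleR_conv_of_real divide_inverse mult.commute)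
  have "(1 / fact k :: real) *\<^sub>R eig_diag z (a ^ k) (b ^ k) (c ^ k)
      = eig_diag z (a ^ k / fact k) (b ^ k / fact k) (c ^ k / fact k)" for k
    by (simp add: vec_eq_iff eig_diag_def) (simp add: scaleR_conv_of_real field_simps)
  moreover have "(\<lambda>k. eig_diag z (a ^ k / fact k) (b ^ k / fact k) (c ^ k / fact k))
      sums eig_diag z (exp a) (exp b) (exp c)"
    unfolding eig_diag_def by (intro sums_add sums_cscaleM exp_sums)
  ultimately show ?thesis
    by (simp add: mexp_def mpow_eig_diag[OF unit] sums_iff)
qed

lemma generator_eq_eig_diag: "cos t *\<^sub>R Jx + sin t *\<^sub>R Jy = eig_diag (cis t) 1 (-1) 0"
proof -
  have cis: "cis t = of_real (cos t) + \<i> * of_real (sin t)"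
    "cnj (cis t) = of_real (cos t) - \<i> * of_real (sin t)"
    by (simp_all add: complex_eq_iff)
  show ?thesis
    unfolding mat3_eq_iff
    by (simp add: Jx_def Jy_def Jplus_def Jminus_def eig_diag_def lam_plus_def lam_minus_def
        lam_zero_def cis sqrt2_def) (simp add: scaleR_conv_of_real field_simps)
qed

lemma Jz_mult_eig_vec:
  assumes "z * cnj z = 1"
  shows "Jz *v eig_vec z x y w = eig_vec z (w * sqrt2 / 2) (w * sqrt2 / 2) ((x + y) * sqrt2 / 2)"
  using assms sqrt2_mult_self
  by (simp add: vec3_eq_iff matrix_vector_mult_3 eig_vec_nth Jz_def field_simps) algebra

lemma Jz_commutator_nth: "(Jz ** M - M ** Jz) $ i $ j = of_int (mq i - mq j) * M $ i $ j"
  by (simp add: matrix_matrix_mult_def Jz_def if_distrib if_distribR algebra_simps cong: if_cong)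

text \<open>The entrywise form of \<open>U(\<phi>) = exp (- \<i> \<phi> Jz) U(0) exp (\<i> \<phi> Jz)\<close>.\<close>

lemma eig_diag_cis_nth:
  "eig_diag (cis t) a b c $ i $ j = cis (of_int (mq j - mq i) * t) * eig_diag 1 a b c $ i $ j"
proof -
  have "i \<in> {0, 1, 2}" "j \<in> {0, 1, 2}"
    using exhaust_3 numeral_3_eq_0 by auto
  then show ?thesis
    by (auto simp: eig_diag_def lam_plus_def lam_minus_def lam_zero_def cis_cnj algebra_simps)
      (simp_all add: cis_mult mult.commute[of t 2] flip: mult.assoc)
qed

lemma has_vector_derivative_eig_diag:
  assumes "(f has_vector_derivative f') (at x)" "(g has_vector_derivative g') (at x)"
    "(h has_vector_derivative h') (at x)"
  shows "((\<lambda>t. eig_diag z (f t) (g t) (h t)) has_vector_derivative eig_diag z f' g' h') (at x)"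
  by (intro vec_has_vector_derivativeI)
    (auto simp: eig_diag_def intro!: derivative_eq_intros assms)

lemma has_vector_derivative_eig_diag_cis:
  "((\<lambda>t. eig_diag (cis t) a b c) has_vector_derivative
     cscaleM (- \<i>) (Jz ** eig_diag (cis x) a b c - eig_diag (cis x) a b c ** Jz)) (at x)"
proof (intro vec_has_vector_derivativeI)
  fix i j
  let ?k = "real_of_int (mq j - mq i)"
  have "((\<lambda>t. cis (?k * t) * eig_diag 1 a b c $ i $ j) has_vector_derivative
      \<i> * of_real ?k * cis (?k * x) * eig_diag 1 a b c $ i $ j) (at x)"
    by (intro has_vector_derivative_mult_left has_vector_derivative_cis_scaled)
  then show "((\<lambda>t. eig_diag (cis t) a b c $ i $ j) has_vector_derivative
      cscaleM (- \<i>) (Jz ** eig_diag (cis x) a b c - eig_diag (cis x) a b c ** Jz) $ i $ j) (at x)"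
    unfolding cscaleM_nth Jz_commutator_nth eig_diag_cis_nth by (simp add: algebra_simps)
qed

lemma cis_mult_cnj: "cis t * cnj (cis t) = 1"
  by (simp add: cis_cnj cis_mult)

lemma Uop_eq_eig_diag: "Uop t B = eig_diag (cis t) (cis (- B)) (cis B) 1"
  unfolding Uop_def generator_eq_eig_diag cscaleM_eig_diag mexp_eig_diag[OF cis_mult_cnj]
  by (simp add: cis_conv_exp)

lemma adjoint_Uop: "adjoint (Uop t B) = eig_diag (cis t) (cis B) (cis (- B)) 1"
  by (simp add: Uop_eq_eig_diag adjoint_eig_diag cis_cnj)

lemma lam_max_eq: "lam_max t = lam_plus (cis t)"
  and lam_min_eq: "lam_min t = lam_minus (cis t)"
  by (simp_all add: vec3_eq_iff lam_max_def lam_min_def lam_plus_def lam_minus_def ket_def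
      cis_cnj cis_conv_exp exp_cnj sqrt2_mult_self[unfolded sqrt2_def] sqrt2_def field_simps)

lemma probe_eq_eig_vec: "probe t \<alpha> \<psi> = eig_vec (cis t) (cos \<alpha>) (cis \<psi> * sin \<alpha>) 0"
  by (simp add: vec_eq_iff probe_def eig_vec_def lam_max_eq lam_min_eq cis_conv_exp)

lemma pd1_Psi: "pd1 (Psi v) t B = cscaleM (- \<i>) (Jz ** Uop t B - Uop t B ** Jz) *v v"
  unfolding pd1_def Psi_def Uop_eq_eig_diag
  by (intro vector_derivative_at has_vector_derivative_matrix_vector_mult
      has_vector_derivative_eig_diag_cis)

lemma pd2_Psi: "pd2 (Psi v) t B = eig_diag (cis t) (- \<i> * cis (- B)) (\<i> * cis B) 0 *v v"
  unfolding pd2_def Psi_def Uop_eq_eig_diag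
  by (intro vector_derivative_at has_vector_derivative_matrix_vector_mult
      has_vector_derivative_eig_diag has_vector_derivative_cis_pm has_vector_derivative_const)

lemma pd1_adjoint_Uop:
  "pd1 (\<lambda>x y. adjoint (Uop x y)) t B
     = cscaleM (- \<i>) (Jz ** adjoint (Uop t B) - adjoint (Uop t B) ** Jz)"
  unfolding pd1_def adjoint_Uop
  by (intro vector_derivative_at has_vector_derivative_eig_diag_cis)

lemma pd2_adjoint_Uop:
  "pd2 (\<lambda>x y. adjoint (Uop x y)) t B = eig_diag (cis t) (\<i> * cis B) (- \<i> * cis (- B)) 0"
  unfolding pd2_def adjoint_Uop
  by (intro vector_derivative_at has_vector_derivative_eig_diag has_vector_derivative_cis_pm
      has_vector_derivative_const)

lemma Psi_probe:
  "Psi (probe \<phi> \<alpha> \<psi>) \<phi> B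
     = eig_vec (cis \<phi>) (cis (- B) * of_real (cos \<alpha>)) (cis B * (cis \<psi> * of_real (sin \<alpha>))) 0"
  by (simp add: Psi_def Uop_eq_eig_diag probe_eq_eig_vec eig_diag_mult_eig_vec[OF cis_mult_cnj])

lemma pd1_Psi_probe:
  "pd1 (Psi (probe \<phi> \<alpha> \<psi>)) \<phi> B = eig_vec (cis \<phi>) 0 0
     (- \<i> * sqrt2 / 2 * (of_real (cos \<alpha>) * (cis (- B) - 1) + cis \<psi> * of_real (sin \<alpha>) * (cis B - 1)))"
  by (simp add: pd1_Psi probe_eq_eig_vec Uop_eq_eig_diag cscaleM_mult_vec matrix_vector_mult_diff_rdistrib
      eig_diag_mult_eig_vec[OF cis_mult_cnj] Jz_mult_eig_vec[OF cis_mult_cnj] eig_vec_diff cscaleV_eig_vec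
      flip: matrix_vector_mul_assoc, rule arg_cong[where f = "eig_vec (cis \<phi>) 0 0"], algebra)

lemma pd2_Psi_probe:
  "pd2 (Psi (probe \<phi> \<alpha> \<psi>)) \<phi> B = eig_vec (cis \<phi>)
     (- \<i> * (cis (- B) * of_real (cos \<alpha>))) (\<i> * (cis B * (cis \<psi> * of_real (sin \<alpha>)))) 0"
  by (simp add: pd2_Psi probe_eq_eig_vec eig_diag_mult_eig_vec[OF cis_mult_cnj] mult.assoc)

section \<open>The quantum Fisher information matrix\<close>

lemma qfim_eig_coords:
  fixes f :: "real \<Rightarrow> real \<Rightarrow> complex^3"
  assumes unit: "z * cnj z = 1" and normalized: "(cmod x)\<^sup>2 + (cmod y)\<^sup>2 = 1"
    and f: "f a b = eig_vec z x y 0" and d1: "pd1 f a b = eig_vec z 0 0 k"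
    and d2: "pd2 f a b = eig_vec z (- \<i> * x) (\<i> * y) 0"
  shows "qfim f a b 1 1 = 4 * (cmod k)\<^sup>2"
    and "qfim f a b 2 2 = 4 * (1 - ((cmod x)\<^sup>2 - (cmod y)\<^sup>2)\<^sup>2)"
    and "qfim f a b 1 2 = 0" and "qfim f a b 2 1 = 0"
proof -
  define X where "X = (cmod x)\<^sup>2 - (cmod y)\<^sup>2"
  have "braket (pd2 f a b) (pd2 f a b) = cnj x * x + cnj y * y"
    by (simp add: d2 braket_eig_vec[OF unit] algebra_simps)
  also have "\<dots> = 1"
    using normalized by (simp add: cnj_mult_self flip: of_real_add of_real_power)
  finally have d2d2: "braket (pd2 f a b) (pd2 f a b) = 1" .
  have "braket (pd2 f a b) (f a b) = \<i> * (cnj x * x - cnj y * y)"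
    by (simp add: d2 f braket_eig_vec[OF unit] algebra_simps)
  also have "\<dots> = \<i> * of_real X"
    by (simp add: X_def cnj_mult_self flip: of_real_diff of_real_power)
  finally have d2f: "braket (pd2 f a b) (f a b) = \<i> * of_real X" .
  then have fd2: "braket (f a b) (pd2 f a b) = - \<i> * of_real X"
    by (subst cnj_braket [symmetric]) simp
  show "qfim f a b 1 1 = 4 * (cmod k)\<^sup>2" "qfim f a b 1 2 = 0" "qfim f a b 2 1 = 0"
    by (simp_all add: qfim_def f d1 d2 braket_eig_vec[OF unit] cnj_mult_self)
  have "qfim f a b 2 2 = 4 * Re (1 - \<i> * of_real X * (- \<i> * of_real X))"
    by (simp add: qfim_def d2d2 d2f fd2)
  also have "\<dots> = 4 * (1 - X\<^sup>2)"
    by (simp add: power2_eq_square)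
  finally show "qfim f a b 2 2 = 4 * (1 - ((cmod x)\<^sup>2 - (cmod y)\<^sup>2)\<^sup>2)"
    by (simp add: X_def)
qed

lemma cmod_phase_combination_sq:
  assumes "c\<^sup>2 + s\<^sup>2 = 1"
  shows "(cmod (of_real c * (cis (- B) - 1) + cis \<psi> * of_real s * (cis B - 1)))\<^sup>2
       = 4 * (sin (B / 2))\<^sup>2 * (1 - 2 * c * s * cos (\<psi> + B))"
proof -
  have half_angle: "2 * (sin (B / 2))\<^sup>2 = 1 - cos B"
    using cos_double_sin[of "B / 2"] by simp
  have pythagoras: "(sin B)\<^sup>2 + (cos B)\<^sup>2 = 1" "(sin \<psi>)\<^sup>2 + (cos \<psi>)\<^sup>2 = 1"
    by simp_all
  show ?thesis
    unfolding cmod_power2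
    by (simp add: cos_add power2_eq_square) (use half_angle pythagoras assms in algebra)
qed

lemma qfim_probe:
  fixes \<phi> \<alpha> \<psi> B :: real
  defines "F \<equiv> qfim (Psi (probe \<phi> \<alpha> \<psi>)) \<phi> B"
  shows "F 1 1 = 8 * (sin (B / 2))\<^sup>2 * (1 - sin (2 * \<alpha>) * cos (\<psi> + B))"
    and "F 2 2 = 4 * (sin (2 * \<alpha>))\<^sup>2"
    and "F 1 2 = 0" and "F 2 1 = 0"
proof -
  have normalized:
    "(cmod (cis (- B) * of_real (cos \<alpha>)))\<^sup>2 + (cmod (cis B * (cis \<psi> * of_real (sin \<alpha>))))\<^sup>2 = 1"
    by (simp add: norm_mult)
  note qfim = qfim_eig_coords[OF cis_mult_cnj normalized Psi_probe pd1_Psi_probe pd2_Psi_probe]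
  let ?X = "of_real (cos \<alpha>) * (cis (- B) - 1) + cis \<psi> * of_real (sin \<alpha>) * (cis B - 1)"
  have "F 1 1 = 4 * (cmod (- \<i> * sqrt2 / 2 * ?X))\<^sup>2"
    unfolding F_def by (rule qfim(1))
  also have "\<dots> = 2 * (cmod ?X)\<^sup>2"
    by (simp add: sqrt2_def norm_mult norm_divide power_mult_distrib power_divide)
  also have "\<dots> = 8 * (sin (B / 2))\<^sup>2 * (1 - sin (2 * \<alpha>) * cos (\<psi> + B))"
    by (simp add: cmod_phase_combination_sq sin_double)
  finally show "F 1 1 = 8 * (sin (B / 2))\<^sup>2 * (1 - sin (2 * \<alpha>) * cos (\<psi> + B))" .
  show "F 2 2 = 4 * (sin (2 * \<alpha>))\<^sup>2"
    unfolding F_def qfim(2) by (simp add: norm_mult cos_double sin_squared_eq)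
  show "F 1 2 = 0" "F 2 1 = 0"
    unfolding F_def by (fact qfim(3), fact qfim(4))
qed

section \<open>The effective Hamiltonians\<close>

lemma adjoint_Uop_mult_Uop: "adjoint (Uop t B) ** Uop t B = mat 1"
  unfolding adjoint_Uop unfolding Uop_eq_eig_diag
  by (simp add: eig_diag_mult[OF cis_mult_cnj] cis_mult eig_diag_1[OF cis_mult_cnj])

lemma effH_B_eq: "effH Uop t B 2 = eig_diag (cis t) (- 1) 1 0"
  unfolding effH_def pd2_adjoint_Uop unfolding Uop_eq_eig_diag
  by (simp add: eig_diag_mult[OF cis_mult_cnj] cscaleM_eig_diag cis_mult mult.assoc)

lemma effH_phi_eq: "effH Uop t B 1 = Jz - adjoint (Uop t B) ** Jz ** Uop t B"
proof (rule iffD2[OF matrix_eq], rule allI)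
  fix v
  have "adjoint (Uop t B) *v (Uop t B *v v) = v"
    by (simp add: matrix_vector_mul_assoc adjoint_Uop_mult_Uop)
  then show "effH Uop t B 1 *v v = (Jz - adjoint (Uop t B) ** Jz ** Uop t B) *v v"
    by (simp add: effH_def pd1_adjoint_Uop cscaleM_mult_left cscaleM_cscaleM cscaleM_1
        matrix_vector_mult_diff_rdistrib flip: matrix_vector_mul_assoc)
qed

lemma hermitian_effH_phi: "adjoint (effH Uop t B 1) = effH Uop t B 1"
  unfolding effH_phi_eq
  by (simp add: adjoint_diff adjoint_mult adjoint_adjoint adjoint_Jz matrix_mul_assoc)

lemma effH_phi_mult_eig_vec:
  "effH Uop t B 1 *v eig_vec (cis t) x y w = eig_vec (cis t) (sqrt2 / 2 * (1 - cis B) * w)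
     (sqrt2 / 2 * (1 - cis (- B)) * w) (sqrt2 / 2 * ((1 - cis (- B)) * x + (1 - cis B) * y))"
  unfolding effH_phi_eq adjoint_Uop unfolding Uop_eq_eig_diag
  by (simp add: matrix_vector_mult_diff_rdistrib eig_diag_mult_eig_vec[OF cis_mult_cnj]
      Jz_mult_eig_vec[OF cis_mult_cnj] eig_vec_diff flip: matrix_vector_mul_assoc)
    (simp add: diff_divide_distrib algebra_simps)

lemma four_sin_half_sq: "complex_of_real (4 * (sin (B / 2))\<^sup>2) = (1 - cis B) * (1 - cis (- B))"
proof -
  have "4 * (sin (B / 2))\<^sup>2 = 2 - 2 * cos B"
    using cos_double_sin[of "B / 2"] by simp
  moreover have "(1 - cis B) * (1 - cis (- B)) = 2 - 2 * complex_of_real (cos B)"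
    by (simp add: algebra_simps cis_mult complex_eq_iff)
  ultimately show ?thesis
    by simp
qed

lemma is_max_of_variance_effH_B:
  "is_max_of {Re (variance s (effH Uop t B 2)) | s. braket s s = 1} 1"
proof (rule is_max_of_variance[where w = "lam_zero (cis t)"
      and \<xi> = "eig_vec (cis t) (sqrt2 / 2) (sqrt2 / 2) 0"])
  note eig = eig_diag_mult_eig_vec[OF cis_mult_cnj] braket_eig_vec[OF cis_mult_cnj] lam_eq_eig_vec
  show "adjoint (effH Uop t B 2) = effH Uop t B 2"
    unfolding effH_B_eq by (simp add: adjoint_eig_diag)
  show "effH Uop t B 2 *v (effH Uop t B 2 *v v)
      = cscaleV (of_real 1) v - cscaleV (braket (lam_zero (cis t)) v) (lam_zero (cis t))" for v
  proof -
    obtain x y w where v: "v = eig_vec (cis t) x y w"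
      using eig_vec_surj[OF cis_mult_cnj] .
    show ?thesis
      unfolding effH_B_eq v by (simp add: eig cscaleV_eig_vec eig_vec_diff)
  qed
  show "braket (eig_vec (cis t) (sqrt2 / 2) (sqrt2 / 2) 0) (eig_vec (cis t) (sqrt2 / 2) (sqrt2 / 2) 0) = 1"
    "braket (lam_zero (cis t)) (eig_vec (cis t) (sqrt2 / 2) (sqrt2 / 2) 0) = 0"
    "braket (eig_vec (cis t) (sqrt2 / 2) (sqrt2 / 2) 0)
       (effH Uop t B 2 *v eig_vec (cis t) (sqrt2 / 2) (sqrt2 / 2) 0) = 0"
    unfolding effH_B_eq using sqrt2_mult_self by (simp_all add: eig)
qed

text \<open>\<open>H\<^sub>\<phi>\<close> annihilates \<open>((1 - exp (\<i> B)) \<lambda>\<^sub>+ - (1 - exp (- \<i> B)) \<lambda>\<^sub>-) / \<surd>2\<close>,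
  the vector \<open>w\<close> below, and its other eigenvalues are \<open>\<plusminus>\<bar>1 - exp (\<i> B)\<bar>\<close>.\<close>

lemma is_max_of_variance_effH_phi:
  "is_max_of {Re (variance s (effH Uop t B 1)) | s. braket s s = 1} (4 * (sin (B / 2))\<^sup>2)"
proof (rule is_max_of_variance[where \<xi> = "lam_zero (cis t)"
      and w = "eig_vec (cis t) (sqrt2 / 2 * (1 - cis B)) (- sqrt2 / 2 * (1 - cis (- B))) 0"])
  note eig = effH_phi_mult_eig_vec braket_eig_vec[OF cis_mult_cnj] lam_eq_eig_vec
  show "adjoint (effH Uop t B 1) = effH Uop t B 1"
    by (rule hermitian_effH_phi)
  show "effH Uop t B 1 *v (effH Uop t B 1 *v v)
      = cscaleV (of_real (4 * (sin (B / 2))\<^sup>2)) v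
        - cscaleV (braket (eig_vec (cis t) (sqrt2 / 2 * (1 - cis B)) (- sqrt2 / 2 * (1 - cis (- B))) 0) v)
            (eig_vec (cis t) (sqrt2 / 2 * (1 - cis B)) (- sqrt2 / 2 * (1 - cis (- B))) 0)" for v
  proof -
    obtain x y w where v: "v = eig_vec (cis t) x y w"
      using eig_vec_surj[OF cis_mult_cnj] .
    show ?thesis
      unfolding v four_sin_half_sq effH_phi_mult_eig_vec
      by (simp add: eig cscaleV_eig_vec eig_vec_diff cis_cnj)
        (intro arg_cong3[where f = "eig_vec (cis t)"]; simp add: field_simps sqrt2_mult_self_left)
  qed
  show "braket (lam_zero (cis t)) (lam_zero (cis t)) = 1"
    "braket (eig_vec (cis t) (sqrt2 / 2 * (1 - cis B)) (- sqrt2 / 2 * (1 - cis (- B))) 0)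
       (lam_zero (cis t)) = 0"
    "braket (lam_zero (cis t)) (effH Uop t B 1 *v lam_zero (cis t)) = 0"
    unfolding lam_eq_eig_vec effH_phi_mult_eig_vec by (simp_all add: braket_eig_vec[OF cis_mult_cnj])
qed

theorem mainTheorem8:
  fixes B \<phi> \<alpha> \<psi> :: real
  assumes "0 \<le> \<alpha>" "\<alpha> \<le> pi/2" "-pi \<le> \<psi>" "\<psi> \<le> pi"
  defines "F \<equiv> qfim (Psi (probe \<phi> \<alpha> \<psi>)) \<phi> B"
  shows "F 1 1 = 8 * (sin (B/2))^2 * (1 - sin (2*\<alpha>) * cos (\<psi> + B))
       \<and> F 2 2 = 4 * (sin (2*\<alpha>))^2
       \<and> F 1 2 = 0 \<and> F 2 1 = 0
       \<and> (\<alpha> = pi/4 \<and> \<psi> = pi - B \<longrightarrow>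
            F 1 1 = 16 * (sin (B/2))^2 \<and> F 2 2 = 4
          \<and> is_max_of {Re (variance s (effH Uop \<phi> B 1)) | s. braket s s = 1} (F 1 1 / 4)
          \<and> is_max_of {Re (variance s (effH Uop \<phi> B 2)) | s. braket s s = 1} (F 2 2 / 4))"
proof -
  have F: "F 1 1 = 8 * (sin (B/2))^2 * (1 - sin (2*\<alpha>) * cos (\<psi> + B))"
    "F 2 2 = 4 * (sin (2*\<alpha>))^2" "F 1 2 = 0" "F 2 1 = 0"
    unfolding F_def by (fact qfim_probe)+
  moreover have "F 1 1 = 16 * (sin (B/2))^2 \<and> F 2 2 = 4
      \<and> is_max_of {Re (variance s (effH Uop \<phi> B 1)) | s. braket s s = 1} (F 1 1 / 4)
      \<and> is_max_of {Re (variance s (effH Uop \<phi> B 2)) | s. braket s s = 1} (F 2 2 / 4)"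
    if "\<alpha> = pi/4 \<and> \<psi> = pi - B"
  proof -
    from that have "2 * \<alpha> = pi / 2" "\<psi> + B = pi"
      by simp_all
    then have "sin (2 * \<alpha>) = 1" "cos (\<psi> + B) = -1"
      by (simp_all only: sin_pi_half cos_pi)
    then have "F 1 1 = 16 * (sin (B/2))^2" "F 2 2 = 4"
      using F by simp_all
    then show ?thesis
      using is_max_of_variance_effH_phi[of \<phi> B] is_max_of_variance_effH_B[of \<phi> B] by simp
  qed
  ultimately show ?thesis
    by blast
qed

end
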